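(* Let $\pi\colon\mathsf{States}\to\mathbb{R}_{\ge0}$ be a potential function, let $C$ be a program and let $f,g\in\mathbb{T}$. If $\mathrm{mod}(C)\cap\mathrm{Vars}(g)=\emptyset$, then $$\mathsf{aert}_\pi[\![C]\!]\big((f\oplus g)-\pi\big)\;\preceq\;\Big(\big(\mathsf{aert}_\pi[\![C]\!](f-\pi)+\pi\big)\oplus g\Big)-\pi .$$
   Context: States and programs. Fix a finite set $\mathrm{Vars}$ of variables; values are $\mathbb{N}$, locations are $\mathbb{N}_{>0}$. A stack is $s\colon \mathrm{Vars}\to\mathbb{N}$; a heap is a partial map $h$ from a finite set $\mathrm{dom}(h)\subseteq\mathbb{N}_{>0}$ to $\mathbb{N}$. $h_1\perp h_2$ means disjoint domains; then $h_1\star h_2$ is their union; $h_\emptyset$ is the empty heap. $\mathsf{States}$ is the set of pairs $(s,h)$. $s(e)$ is the value of a (heap-independent) arithmetic expression $e$ under $s$, $s\models\varphi$ means the Boolean expression $\varphi$ holds under $s$, $s[x\mapsto v]$ is the updated stack. Programs are generated by $C ::= \mathtt{tick}(e) \mid x:=e \mid x:=\mathtt{alloc}(e) \mid \langle e\rangle:=e' \mid x:=\langle e\rangle \mid \mathtt{free}(e) \mid \{C\}[p]\{C\} \mid \mathtt{if}(\varphi)\{C\}\mathtt{else}\{C\} \mid C;C \mid \mathtt{while}(\varphi)\{C\}$, where $p$ is an expression with $s(p)\in[0,1]\cap\mathbb{Q}$ for all $s$. The statements other than tick, probabilistic choice, conditional, sequencing and loops are called atomic. $\mathrm{mod}(C)$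 is the set of variables potentially modified by $C$, i.e. the variables $x$ occurring as the target of $x:=e$, $x:=\mathtt{alloc}(e)$ or $x:=\langle e\rangle$ in $C$. For a runtime $g$, $x\notin\mathrm{Vars}(g)$ means $g(s[x\mapsto v],h)=g(s,h)$ for all $(s,h)$ and $v$. Runtimes. $\mathbb{T}$ is the set of functions $\mathsf{States}\to[0,\infty]$, ordered pointwise by $\preceq$; arithmetic is pointwise with $0\cdot\infty=0$. $[\varphi]$ is the $0/1$-valued Iverson bracket. Truncated subtraction: $a\dot- b=\max(a-b,0)$, $\infty\dot- b=\infty$ for finite $b$, $a\dot-\infty=0$. Separating sum $(f\oplus g)(s,h)=\min\{f(s,h_1)+g(s,h_2)\mid h=h_1\star h_2\}$ (also applied to nonnegative functions with values in $[0,\infty]$); $(f \mathbin{-\!\!\ominus} g)(s,h)=\sup\{g(s,h\star h')\dot- f(s,h')\mid h'\perp h\}$; $(\inf y\colon f)(s,h)=\inf_{v\in\mathbb{N}} f(s[y\mapsto v],h)$, $(\sup y\colon f)(s,h)=\sup_{v\in\mathbb{N}}f(s[y\mapsto v],h)$; $f[x/e](s,h)=f(s[x\mapsto s(e)],h)$. $\mathsf{tm}(e)(s,h)=s(e)$ if $h=h_\emptyset$, else $\infty$; $[e\mapsto e'](s,h)=0$ if $\mathrm{dom}(h)=\{s(e)\}$ and $h(s(e))=s(e')$, else $\infty$; $[e\mapsto -](s,h)=0$ if $\mathrm{dom}(h)=\{s(e)\}$, else $\infty$; $\bigoplus_{i=1}^{e} f_i$ is the separating sum over $i=1,\dots,s(e)$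 (empty one: $[\mathsf{emp}]$, which is $0$ if $h=h_\emptyset$, else $\infty$). $\mathsf{ert}[\![C]\!]\colon\mathbb{T}\to\mathbb{T}$ (with $v$ fresh): $\mathsf{ert}[\![\mathtt{tick}(e)]\!](f)=\mathsf{tm}(e)\oplus f$; $\mathsf{ert}[\![x:=e]\!](f)=f[x/e]$; $\mathsf{ert}[\![x:=\mathtt{alloc}(e)]\!](f)=\sup v\colon (\bigoplus_{i=1}^{e}[v+i-1\mapsto 0])\mathbin{-\!\!\ominus} f[x/v]$; $\mathsf{ert}[\![\langle e\rangle:=e']\!](f)=[e\mapsto-]\oplus([e\mapsto e']\mathbin{-\!\!\ominus} f)$; $\mathsf{ert}[\![x:=\langle e\rangle]\!](f)=\inf v\colon [e\mapsto v]\oplus([e\mapsto v]\mathbin{-\!\!\ominus} f[x/v])$; $\mathsf{ert}[\![\mathtt{free}(e)]\!](f)=[e\mapsto-]\oplus f$; $\mathsf{ert}[\![C_1;C_2]\!](f)=\mathsf{ert}[\![C_1]\!](\mathsf{ert}[\![C_2]\!](f))$; conditional: $[\varphi]\cdot\mathsf{ert}[\![C_1]\!](f)+[\neg\varphi]\cdot\mathsf{ert}[\![C_2]\!](f)$; probabilistic choice: $p\cdot\mathsf{ert}[\![C_1]\!](f)+(1-p)\cdot\mathsf{ert}[\![C_2]\!](f)$; $\mathsf{ert}[\![\mathtt{while}(\varphi)\{C\}]\!](f)=\mathrm{lfp}\, g.\ [\neg\varphi]\cdot f+[\varphi]\cdot\mathsf{ert}[\![C]\!](g)$. Amortized runtimes.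 A potential function is $\pi\colon\mathsf{States}\to\mathbb{R}_{\ge0}$. $\mathbb{A}_\pi=\{X\colon\mathsf{States}\to\mathbb{R}\cup\{\infty\}\mid -\pi\le X\}$, ordered pointwise (complete lattice, least element $-\pi$). $\mathsf{aert}_\pi[\![C]\!]\colon\mathbb{A}_\pi\to\mathbb{A}_\pi$: $\mathsf{aert}_\pi[\![\mathtt{tick}(e)]\!](X)=e+X$; for atomic $C$ other than tick, $\mathsf{aert}_\pi[\![C]\!](X)=\mathsf{ert}[\![C]\!](X+\pi)-\pi$; sequencing by composition; conditional $[\varphi]\cdot\mathsf{aert}_\pi[\![C_1]\!](X)+[\neg\varphi]\cdot\mathsf{aert}_\pi[\![C_2]\!](X)$; probabilistic choice $p\cdot\mathsf{aert}_\pi[\![C_1]\!](X)+(1-p)\cdot\mathsf{aert}_\pi[\![C_2]\!](X)$; $\mathsf{aert}_\pi[\![\mathtt{while}(\varphi)\{C'\}]\!](X)=\mathrm{lfp}\,Y.\ [\neg\varphi]\cdot X+[\varphi]\cdot\mathsf{aert}_\pi[\![C']\!](Y)$ in $(\mathbb{A}_\pi,\preceq)$. *)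

theory Defs
  imports Complex_Main "HOL-Library.Extended_Nonnegative_Real" "HOL-Library.Extended_Real"
begin

typedef heap = "{h :: nat \<rightharpoonup> nat. finite (dom h) \<and> 0 \<notin> dom h}"
  morphisms hmap Abs_heap
  by (rule exI[of _ Map.empty]) auto

definition hemp :: heap where "hemp = Abs_heap Map.empty"

definition hdisj :: "heap \<Rightarrow> heap \<Rightarrow> bool" where
  "hdisj h1 h2 \<longleftrightarrow> dom (hmap h1) \<inter> dom (hmap h2) = {}"

definition hunion :: "heap \<Rightarrow> heap \<Rightarrow> heap" where
  "hunion h1 h2 = Abs_heap (hmap h1 ++ hmap h2)"

type_synonym 'v stack = "'v \<Rightarrow> nat"
type_synonym 'v state = "'v stack \<times> heap"
type_synonym 'v rt = "'v state \<Rightarrow> ennreal"     (* the runtimes T *)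
type_synonym 'v art = "'v state \<Rightarrow> ereal"      (* candidates for A_pi *)

section \<open>Programs (expressions are shallow: functions of the stack)\<close>

datatype 'v prog =
    Tick "'v stack \<Rightarrow> nat"
  | Assign 'v "'v stack \<Rightarrow> nat"
  | Alloc 'v "'v stack \<Rightarrow> nat"
  | Store "'v stack \<Rightarrow> nat" "'v stack \<Rightarrow> nat"
  | Load 'v "'v stack \<Rightarrow> nat"
  | Free "'v stack \<Rightarrow> nat"
  | PChoice "'v prog" "'v stack \<Rightarrow> real" "'v prog"
  | If "'v stack \<Rightarrow> bool" "'v prog" "'v prog"
  | Seq "'v prog" "'v prog"
  | While "'v stack \<Rightarrow> bool" "'v prog"

primrec wf_prog :: "'v prog \<Rightarrow> bool" where
  "wf_prog (Tick e) = True"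
| "wf_prog (Assign x e) = True"
| "wf_prog (Alloc x e) = True"
| "wf_prog (Store e e') = True"
| "wf_prog (Load x e) = True"
| "wf_prog (Free e) = True"
| "wf_prog (PChoice C1 p C2) =
     ((\<forall>s. 0 \<le> p s \<and> p s \<le> 1 \<and> p s \<in> \<rat>) \<and> wf_prog C1 \<and> wf_prog C2)"
| "wf_prog (If b C1 C2) = (wf_prog C1 \<and> wf_prog C2)"
| "wf_prog (Seq C1 C2) = (wf_prog C1 \<and> wf_prog C2)"
| "wf_prog (While b C) = wf_prog C"

primrec modv :: "'v prog \<Rightarrow> 'v set" where
  "modv (Tick e) = {}"
| "modv (Assign x e) = {x}"
| "modv (Alloc x e) = {x}"
| "modv (Store e e') = {}"
| "modv (Load x e) = {x}"
| "modv (Free e) = {}"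
| "modv (PChoice C1 p C2) = modv C1 \<union> modv C2"
| "modv (If b C1 C2) = modv C1 \<union> modv C2"
| "modv (Seq C1 C2) = modv C1 \<union> modv C2"
| "modv (While b C) = modv C"

definition vars_of :: "('v state \<Rightarrow> 'a) \<Rightarrow> 'v set" where
  "vars_of g = {x. \<not> (\<forall>s h v. g (s(x := v), h) = g (s, h))}"

definition tsub :: "ennreal \<Rightarrow> ennreal \<Rightarrow> ennreal" where
  "tsub a b = (if b = top then 0 else a - b)"

definition sepsum :: "'v rt \<Rightarrow> 'v rt \<Rightarrow> 'v rt" where
  "sepsum f g = (\<lambda>(s, h). INF p \<in> {(h1, h2). hdisj h1 h2 \<and> h = hunion h1 h2}.
                              f (s, fst p) + g (s, snd p))"

definition wand :: "'v rt \<Rightarrow> 'v rt \<Rightarrow> 'v rt" where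
  "wand f g = (\<lambda>(s, h). SUP h' \<in> {h'. hdisj h' h}. tsub (g (s, hunion h h')) (f (s, h')))"

definition tm :: "('v stack \<Rightarrow> nat) \<Rightarrow> 'v rt" where
  "tm e = (\<lambda>(s, h). if h = hemp then of_nat (e s) else top)"

definition emp :: "'v rt" where
  "emp = (\<lambda>(s, h). if h = hemp then 0 else top)"

definition pt :: "('v stack \<Rightarrow> nat) \<Rightarrow> ('v stack \<Rightarrow> nat) \<Rightarrow> 'v rt" where
  "pt e e' = (\<lambda>(s, h). if dom (hmap h) = {e s} \<and> hmap h (e s) = Some (e' s) then 0 else top)"

definition ptany :: "('v stack \<Rightarrow> nat) \<Rightarrow> 'v rt" where
  "ptany e = (\<lambda>(s, h). if dom (hmap h) = {e s} then 0 else top)"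

primrec bigsep :: "(nat \<Rightarrow> 'v rt) \<Rightarrow> nat \<Rightarrow> 'v rt" where
  "bigsep F 0 = emp"
| "bigsep F (Suc n) = sepsum (bigsep F n) (F (Suc n))"

definition subst :: "'v rt \<Rightarrow> 'v \<Rightarrow> ('v stack \<Rightarrow> nat) \<Rightarrow> 'v rt" where
  "subst f x e = (\<lambda>(s, h). f (s(x := e s), h))"

primrec ert :: "'v prog \<Rightarrow> 'v rt \<Rightarrow> 'v rt" where
  "ert (Tick e) f = sepsum (tm e) f"
| "ert (Assign x e) f = subst f x e"
| "ert (Alloc x e) f = (\<lambda>\<sigma>. SUP v\<in>(UNIV::nat set).
      wand (\<lambda>\<tau>. bigsep (\<lambda>i. pt (\<lambda>_. v + i - 1) (\<lambda>_. 0)) (e (fst \<tau>)) \<tau>)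
           (subst f x (\<lambda>_. v)) \<sigma>)"
| "ert (Store e e') f = sepsum (ptany e) (wand (pt e e') f)"
| "ert (Load x e) f = (\<lambda>\<sigma>. INF v\<in>(UNIV::nat set).
      sepsum (pt e (\<lambda>_. v)) (wand (pt e (\<lambda>_. v)) (subst f x (\<lambda>_. v))) \<sigma>)"
| "ert (Free e) f = sepsum (ptany e) f"
| "ert (PChoice C1 p C2) f =
     (\<lambda>\<sigma>. ennreal (p (fst \<sigma>)) * ert C1 f \<sigma> + ennreal (1 - p (fst \<sigma>)) * ert C2 f \<sigma>)"
| "ert (If b C1 C2) f = (\<lambda>\<sigma>. if b (fst \<sigma>) then ert C1 f \<sigma> else ert C2 f \<sigma>)"
| "ert (Seq C1 C2) f = ert C1 (ert C2 f)"
| "ert (While b C) f = lfp (\<lambda>g \<sigma>. if b (fst \<sigma>) then ert C g \<sigma> else f \<sigma>)"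

definition atom_aert :: "('v state \<Rightarrow> real) \<Rightarrow> 'v prog \<Rightarrow> 'v art \<Rightarrow> 'v art" where
  "atom_aert \<pi> C X =
     (\<lambda>\<sigma>. enn2ereal (ert C (\<lambda>\<tau>. e2ennreal (X \<tau> + ereal (\<pi> \<tau>))) \<sigma>) - ereal (\<pi> \<sigma>))"

text \<open>Least fixed point in the complete lattice A_pi = {X. -pi <= X} (Knaster-Tarski).\<close>
definition lfp_A :: "('v state \<Rightarrow> real) \<Rightarrow> ('v art \<Rightarrow> 'v art) \<Rightarrow> 'v art" where
  "lfp_A \<pi> F = Inf {Y. (\<forall>\<sigma>. - ereal (\<pi> \<sigma>) \<le> Y \<sigma>) \<and> F Y \<le> Y}"

primrec aert :: "('v state \<Rightarrow> real) \<Rightarrow> 'v prog \<Rightarrow> 'v art \<Rightarrow> 'v art" where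
  "aert \<pi> (Tick e) X = (\<lambda>\<sigma>. ereal (real (e (fst \<sigma>))) + X \<sigma>)"
| "aert \<pi> (Assign x e) X = atom_aert \<pi> (Assign x e) X"
| "aert \<pi> (Alloc x e) X = atom_aert \<pi> (Alloc x e) X"
| "aert \<pi> (Store e e') X = atom_aert \<pi> (Store e e') X"
| "aert \<pi> (Load x e) X = atom_aert \<pi> (Load x e) X"
| "aert \<pi> (Free e) X = atom_aert \<pi> (Free e) X"
| "aert \<pi> (PChoice C1 p C2) X =
     (\<lambda>\<sigma>. ereal (p (fst \<sigma>)) * aert \<pi> C1 X \<sigma> + ereal (1 - p (fst \<sigma>)) * aert \<pi> C2 X \<sigma>)"
| "aert \<pi> (If b C1 C2) X = (\<lambda>\<sigma>. if b (fst \<sigma>) then aert \<pi> C1 X \<sigma> else aert \<pi> C2 X \<sigma>)"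
| "aert \<pi> (Seq C1 C2) X = aert \<pi> C1 (aert \<pi> C2 X)"
| "aert \<pi> (While b C) X =
     lfp_A \<pi> (\<lambda>Y \<sigma>. if b (fst \<sigma>) then aert \<pi> C Y \<sigma> else X \<sigma>)"

end

theory Submission
  imports Defs
begin

text \<open>
  Write \<open>f - \<pi>\<close> for the amortization of a runtime \<open>f\<close>. By induction on the program,
  \<open>aert\<^sub>\<pi>[C](f - \<pi>) = ert[C](f) - \<pi>\<close>: for atomic statements this is the definition, for
  ticks and choices it is arithmetic, and for loops the map \<open>f \<mapsto> f - \<pi>\<close> is an order
  isomorphism between the runtimes and \<open>A\<^sub>\<pi>\<close> that transports least fixed points. The theorem
  thus reduces to the frame rule \<open>ert[C](f \<oplus> g) \<preceq> ert[C](f) \<oplus> g\<close>, again by induction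
  on \<open>C\<close>: the heap part of \<open>g\<close> is framed away through separating sums and magic wands,
  and \<open>g\<close> never sees a change of the stack because \<open>C\<close> modifies none of its variables.
\<close>

lemma hmap_Abs_heap: "finite (dom m) \<Longrightarrow> 0 \<notin> dom m \<Longrightarrow> hmap (Abs_heap m) = m"
  by (simp add: Abs_heap_inverse)

lemma hmap_hemp [simp]: "hmap hemp = Map.empty"
  unfolding hemp_def by (simp add: hmap_Abs_heap)

lemma hmap_hunion [simp]: "hmap (hunion h1 h2) = hmap h1 ++ hmap h2"
  using hmap[of h1] hmap[of h2] unfolding hunion_def by (subst hmap_Abs_heap) auto

lemma heap_eq_iff: "h1 = h2 \<longleftrightarrow> hmap h1 = hmap h2"
  by (simp add: hmap_inject)

lemma hunion_hemp [simp]: "hunion hemp h = h" "hunion h hemp = h"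
  by (simp_all add: heap_eq_iff)

lemma hdisj_hemp [simp]: "hdisj hemp h" "hdisj h hemp"
  by (simp_all add: hdisj_def)

lemma hdisj_commute: "hdisj h1 h2 \<longleftrightarrow> hdisj h2 h1"
  by (auto simp: hdisj_def)

lemma hunion_commute: "hdisj h1 h2 \<Longrightarrow> hunion h1 h2 = hunion h2 h1"
  unfolding heap_eq_iff hdisj_def hmap_hunion by (rule map_add_comm)

lemma hunion_assoc: "hunion (hunion h1 h2) h3 = hunion h1 (hunion h2 h3)"
  by (simp add: heap_eq_iff)

lemma hdisj_hunion_iff [simp]:
  "hdisj h (hunion h1 h2) \<longleftrightarrow> hdisj h h1 \<and> hdisj h h2"
  "hdisj (hunion h1 h2) h \<longleftrightarrow> hdisj h1 h \<and> hdisj h2 h"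
  by (auto simp: hdisj_def)

section \<open>Separating sums and magic wands\<close>

lemma sepsum_le:
  "hdisj h1 h2 \<Longrightarrow> h = hunion h1 h2 \<Longrightarrow> sepsum f g (s, h) \<le> f (s, h1) + g (s, h2)"
  unfolding sepsum_def by (auto intro: INF_lower2[of "(h1, h2)"])

lemma le_sepsum:
  "(\<And>h1 h2. hdisj h1 h2 \<Longrightarrow> h = hunion h1 h2 \<Longrightarrow> x \<le> f (s, h1) + g (s, h2))
    \<Longrightarrow> x \<le> sepsum f g (s, h)"
  unfolding sepsum_def by (auto intro: INF_greatest)

lemma sepsum_mono: "f \<le> f' \<Longrightarrow> g \<le> g' \<Longrightarrow> sepsum f g \<le> sepsum f' g'"
  unfolding le_fun_def sepsum_def by (auto intro!: INF_mono' add_mono)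

lemma le_INF_add_ennreal:
  fixes x c :: ennreal
  assumes "\<And>i. i \<in> A \<Longrightarrow> x \<le> F i + c"
  shows "x \<le> (INF i\<in>A. F i) + c"
proof (cases "c = top")
  case False
  then have "x - c \<le> (INF i\<in>A. F i)"
    using assms by (intro INF_greatest) (auto simp: ennreal_minus_le_iff add.commute)
  then show ?thesis
    using False by (simp add: ennreal_minus_le_iff add.commute)
qed simp

lemma sepsum_assoc_le: "sepsum f (sepsum f' g) \<le> sepsum (sepsum f f') g"
proof (rule le_funI, clarify, rule le_sepsum)
  fix s h h12 h3
  assume disj: "hdisj h12 h3" and h: "h = hunion h12 h3"
  show "sepsum f (sepsum f' g) (s, h) \<le> sepsum f f' (s, h12) + g (s, h3)"
    unfolding sepsum_def[of f f'] prod.case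
  proof (rule le_INF_add_ennreal, clarify)
    fix h1 h2 assume "hdisj h1 h2" "h12 = hunion h1 h2"
    then have "sepsum f (sepsum f' g) (s, h) \<le> f (s, h1) + sepsum f' g (s, hunion h2 h3)"
      using disj h by (intro sepsum_le) (auto simp: hunion_assoc)
    also have "\<dots> \<le> f (s, h1) + f' (s, h2) + g (s, h3)"
      using \<open>hdisj h1 h2\<close> \<open>h12 = hunion h1 h2\<close> disj
      by (simp add: add.assoc add_left_mono sepsum_le)
    finally show "sepsum f (sepsum f' g) (s, h) \<le> f (s, fst (h1, h2)) + f' (s, snd (h1, h2)) + g (s, h3)"
      by simp
  qed
qed

lemma sepsum_if:
  "sepsum (\<lambda>\<tau>. if b (fst \<tau>) then f \<tau> else f' \<tau>) g
     = (\<lambda>\<tau>. if b (fst \<tau>) then sepsum f g \<tau> else sepsum f' g \<tau>)"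
  by (auto simp: sepsum_def fun_eq_iff)

lemma sepsum_tm: "sepsum (tm e) f = (\<lambda>\<sigma>. of_nat (e (fst \<sigma>)) + f \<sigma>)"
proof (rule ext, clarify, rule antisym)
  fix s h
  show "sepsum (tm e) f (s, h) \<le> of_nat (e (fst (s, h))) + f (s, h)"
    using sepsum_le[of hemp h h "tm e" f s] by (simp add: tm_def)
  show "of_nat (e (fst (s, h))) + f (s, h) \<le> sepsum (tm e) f (s, h)"
    by (rule le_sepsum) (auto simp: tm_def)
qed

lemma SUP_sepsum_le: "(SUP v\<in>V. sepsum (f v) g \<sigma>) \<le> sepsum (\<lambda>\<tau>. SUP v\<in>V. f v \<tau>) g \<sigma>"
  by (rule SUP_least, rule le_funD[OF sepsum_mono]) (auto intro!: le_funI SUP_upper)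

lemma INF_sepsum_le: "(INF v\<in>V. sepsum (f v) g \<sigma>) \<le> sepsum (\<lambda>\<tau>. INF v\<in>V. f v \<tau>) g \<sigma>"
proof (cases \<sigma>)
  case (Pair s h)
  show ?thesis
    unfolding Pair
  proof (rule le_sepsum, rule le_INF_add_ennreal)
    fix h1 h2 v assume "hdisj h1 h2" "h = hunion h1 h2" "v \<in> V"
    then show "(INF v\<in>V. sepsum (f v) g (s, h)) \<le> f v (s, h1) + g (s, h2)"
      by (meson INF_lower2 sepsum_le)
  qed
qed

lemma pchoice_sepsum_le:
  assumes "\<And>s. 0 \<le> p s" "\<And>s. p s \<le> 1"
  shows "(\<lambda>\<tau>. ennreal (p (fst \<tau>)) * sepsum f g \<tau> + ennreal (1 - p (fst \<tau>)) * sepsum f' g \<tau>)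
     \<le> sepsum (\<lambda>\<tau>. ennreal (p (fst \<tau>)) * f \<tau> + ennreal (1 - p (fst \<tau>)) * f' \<tau>) g"
proof (rule le_funI, clarify, rule le_sepsum)
  fix s h h1 h2
  assume "hdisj h1 h2" "h = hunion h1 h2"
  then have "ennreal (p s) * sepsum f g (s, h) + ennreal (1 - p s) * sepsum f' g (s, h)
     \<le> ennreal (p s) * (f (s, h1) + g (s, h2)) + ennreal (1 - p s) * (f' (s, h1) + g (s, h2))"
    by (intro add_mono mult_left_mono sepsum_le) auto
  also have "\<dots> = ennreal (p s) * f (s, h1) + ennreal (1 - p s) * f' (s, h1)
      + (ennreal (p s) + ennreal (1 - p s)) * g (s, h2)"
    by (simp add: algebra_simps)
  also have "ennreal (p s) + ennreal (1 - p s) = 1"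
    using assms[of s] by (simp flip: ennreal_plus)
  finally show "ennreal (p (fst (s, h))) * sepsum f g (s, h)
      + ennreal (1 - p (fst (s, h))) * sepsum f' g (s, h)
    \<le> ennreal (p (fst (s, h1))) * f (s, h1) + ennreal (1 - p (fst (s, h1))) * f' (s, h1)
      + g (s, h2)"
    by simp
qed

lemma tsub_mono: "a \<le> b \<Longrightarrow> tsub a c \<le> tsub b c"
  by (simp add: tsub_def ennreal_minus_mono)

lemma tsub_le_add: "a \<le> b + d \<Longrightarrow> tsub a c \<le> tsub b c + d"
proof (cases "c = top")
  case False
  assume "a \<le> b + d"
  also have "b \<le> c + (b - c)"
    using ennreal_minus_le_iff[of b c "b - c"] by simp
  finally have "a - c \<le> (b - c) + d"
    using False by (simp add: ennreal_minus_le_iff add.assoc add_right_mono)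
  then show ?thesis
    using False by (simp add: tsub_def)
qed (simp add: tsub_def)

lemma wand_mono: "g \<le> g' \<Longrightarrow> wand f g \<le> wand f g'"
  unfolding le_fun_def wand_def by (auto intro!: SUP_mono' tsub_mono)

lemma wand_sepsum_le: "wand f (sepsum f' g) \<le> sepsum (wand f f') g"
proof (rule le_funI, clarify, rule le_sepsum)
  fix s h h1 h2
  assume disj: "hdisj h1 h2" and h: "h = hunion h1 h2"
  show "wand f (sepsum f' g) (s, h) \<le> wand f f' (s, h1) + g (s, h2)"
    unfolding wand_def prod.case
  proof (rule SUP_least)
    fix h' assume "h' \<in> {h'. hdisj h' h}"
    then have disj': "hdisj h' h1" "hdisj h' h2"
      using h by auto
    have "hunion h h' = hunion (hunion h1 h') h2"
      using h disj disj' by (metis hunion_assoc hunion_commute hdisj_commute)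
    then have "sepsum f' g (s, hunion h h') \<le> f' (s, hunion h1 h') + g (s, h2)"
      using disj disj' by (intro sepsum_le) (auto simp: hdisj_commute)
    then have "tsub (sepsum f' g (s, hunion h h')) (f (s, h'))
        \<le> tsub (f' (s, hunion h1 h')) (f (s, h')) + g (s, h2)"
      by (rule tsub_le_add)
    also have "\<dots> \<le> (SUP h'\<in>{h'. hdisj h' h1}. tsub (f' (s, hunion h1 h')) (f (s, h'))) + g (s, h2)"
      using disj' by (intro add_right_mono SUP_upper) auto
    finally show "tsub (sepsum f' g (s, hunion h h')) (f (s, h'))
        \<le> (SUP h'\<in>{h'. hdisj h' h1}. tsub (f' (s, hunion h1 h')) (f (s, h'))) + g (s, h2)" .
  qed
qed

lemma subst_mono: "g \<le> g' \<Longrightarrow> subst g x e \<le> subst g' x e"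
  unfolding le_fun_def subst_def by auto

lemma subst_sepsum: "x \<notin> vars_of g \<Longrightarrow> subst (sepsum f g) x e = sepsum (subst f x e) g"
  unfolding subst_def sepsum_def vars_of_def by (auto intro!: ext)

section \<open>The frame rule for expected runtimes\<close>

lemma ert_mono: "f \<le> f' \<Longrightarrow> ert C f \<le> ert C f'"
proof (induction C arbitrary: f f')
  case (Alloc x e)
  then show ?case
    by (auto simp: le_fun_def intro!: SUP_mono' wand_mono[THEN le_funD] subst_mono)
next
  case (Load x e)
  then show ?case
    by (auto simp: le_fun_def intro!: INF_mono' sepsum_mono[THEN le_funD] wand_mono subst_mono)
next
  case (PChoice C1 p C2)
  then show ?case
    by (auto simp: le_fun_def intro!: add_mono mult_left_mono)
next
  case (If b C1 C2)
  then show ?case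
    by (auto simp: le_fun_def)
next
  case (While b C)
  then show ?case
    by (simp, intro lfp_mono) (auto simp: le_fun_def)
qed (simp_all add: sepsum_mono subst_mono wand_mono)

lemma mono_ert_loop: "mono (\<lambda>k \<sigma>. if b (fst \<sigma>) then ert C k \<sigma> else f \<sigma>)"
  by (rule monoI, rule le_funI) (auto dest: ert_mono[of _ _ C] le_funD)

lemma ert_Alloc_frame:
  assumes "x \<notin> vars_of g"
  shows "ert (Alloc x e) (sepsum f g) \<le> sepsum (ert (Alloc x e) f) g"
proof (rule le_funI)
  fix \<sigma>
  let ?cells = "\<lambda>v \<tau>. bigsep (\<lambda>i. pt (\<lambda>_. v + i - 1) (\<lambda>_. 0)) (e (fst \<tau>)) \<tau>"
  have "ert (Alloc x e) (sepsum f g) \<sigma>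
      = (SUP v. wand (?cells v) (sepsum (subst f x (\<lambda>_. v)) g) \<sigma>)"
    by (simp add: subst_sepsum[OF assms])
  also have "\<dots> \<le> (SUP v. sepsum (wand (?cells v) (subst f x (\<lambda>_. v))) g \<sigma>)"
    by (intro SUP_mono' wand_sepsum_le[THEN le_funD])
  also have "\<dots> \<le> sepsum (ert (Alloc x e) f) g \<sigma>"
    unfolding ert.simps by (rule SUP_sepsum_le)
  finally show "ert (Alloc x e) (sepsum f g) \<sigma> \<le> sepsum (ert (Alloc x e) f) g \<sigma>" .
qed

lemma ert_Load_frame:
  assumes "x \<notin> vars_of g"
  shows "ert (Load x e) (sepsum f g) \<le> sepsum (ert (Load x e) f) g"
proof (rule le_funI)
  fix \<sigma>
  let ?cell = "\<lambda>v. pt e (\<lambda>_. v)"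
  have "ert (Load x e) (sepsum f g) \<sigma>
      = (INF v. sepsum (?cell v) (wand (?cell v) (sepsum (subst f x (\<lambda>_. v)) g)) \<sigma>)"
    by (simp add: subst_sepsum[OF assms])
  also have "\<dots> \<le> (INF v. sepsum (?cell v) (sepsum (wand (?cell v) (subst f x (\<lambda>_. v))) g) \<sigma>)"
    by (rule INF_mono', rule le_funD[OF sepsum_mono[OF order_refl wand_sepsum_le]])
  also have "\<dots> \<le> (INF v. sepsum (sepsum (?cell v) (wand (?cell v) (subst f x (\<lambda>_. v)))) g \<sigma>)"
    by (rule INF_mono', rule le_funD[OF sepsum_assoc_le])
  also have "\<dots> \<le> sepsum (ert (Load x e) f) g \<sigma>"
    unfolding ert.simps by (rule INF_sepsum_le)
  finally show "ert (Load x e) (sepsum f g) \<sigma> \<le> sepsum (ert (Load x e) f) g \<sigma>" .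
qed

lemma ert_While_frame:
  assumes body: "\<And>f. ert C (sepsum f g) \<le> sepsum (ert C f) g"
  shows "ert (While b C) (sepsum f g) \<le> sepsum (ert (While b C) f) g"
proof -
  define L where "L = ert (While b C) f"
  have L: "(\<lambda>\<sigma>. if b (fst \<sigma>) then ert C L \<sigma> else f \<sigma>) = L"
    unfolding L_def ert.simps by (rule lfp_fixpoint[OF mono_ert_loop])
  have "(\<lambda>\<sigma>. if b (fst \<sigma>) then ert C (sepsum L g) \<sigma> else sepsum f g \<sigma>)
      \<le> (\<lambda>\<sigma>. if b (fst \<sigma>) then sepsum (ert C L) g \<sigma> else sepsum f g \<sigma>)"
    using body by (auto simp: le_fun_def)
  also have "\<dots> = sepsum L g"
    by (subst L[symmetric]) (simp add: sepsum_if)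
  finally show ?thesis
    unfolding L_def by (subst ert.simps) (rule lfp_lowerbound)
qed

lemma ert_frame:
  "wf_prog C \<Longrightarrow> modv C \<inter> vars_of g = {} \<Longrightarrow> ert C (sepsum f g) \<le> sepsum (ert C f) g"
proof (induction C arbitrary: f)
  case (Alloc x e)
  then show ?case by (intro ert_Alloc_frame) simp
next
  case (Store e e')
  have "ert (Store e e') (sepsum f g) \<le> sepsum (ptany e) (sepsum (wand (pt e e') f) g)"
    by (simp add: sepsum_mono wand_sepsum_le)
  also have "\<dots> \<le> sepsum (ert (Store e e') f) g"
    by (simp add: sepsum_assoc_le)
  finally show ?case .
next
  case (Load x e)
  then show ?case by (intro ert_Load_frame) simp
next
  case (PChoice C1 p C2)
  then have "ert C1 (sepsum f g) \<le> sepsum (ert C1 f) g"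
    and "ert C2 (sepsum f g) \<le> sepsum (ert C2 f) g"
    by (auto intro: PChoice.IH)
  then have "ert (PChoice C1 p C2) (sepsum f g)
      \<le> (\<lambda>\<tau>. ennreal (p (fst \<tau>)) * sepsum (ert C1 f) g \<tau>
              + ennreal (1 - p (fst \<tau>)) * sepsum (ert C2 f) g \<tau>)"
    by (auto simp: le_fun_def intro!: add_mono mult_left_mono)
  also have "\<dots> \<le> sepsum (ert (PChoice C1 p C2) f) g"
    using PChoice.prems by (simp add: pchoice_sepsum_le)
  finally show ?case .
next
  case (If b C1 C2)
  then have "ert C1 (sepsum f g) \<le> sepsum (ert C1 f) g"
    and "ert C2 (sepsum f g) \<le> sepsum (ert C2 f) g"
    by (auto intro: If.IH)
  then show ?case
    by (simp add: sepsum_if le_fun_def)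
next
  case (Seq C1 C2)
  then have "ert C2 (sepsum f g) \<le> sepsum (ert C2 f) g"
    by (auto intro: Seq.IH)
  then have "ert C1 (ert C2 (sepsum f g)) \<le> ert C1 (sepsum (ert C2 f) g)"
    by (rule ert_mono)
  also have "\<dots> \<le> sepsum (ert C1 (ert C2 f)) g"
    using Seq.prems by (auto intro: Seq.IH)
  finally show ?case
    by simp
next
  case (While b C)
  then have "wf_prog C" "modv C \<inter> vars_of g = {}"
    by simp_all
  then show ?case
    by (intro ert_While_frame While.IH)
qed (simp_all add: sepsum_assoc_le subst_sepsum)

section \<open>Amortized runtimes as shifted expected runtimes\<close>

definition amortize :: "('v state \<Rightarrow> real) \<Rightarrow> 'v rt \<Rightarrow> 'v art" where
  "amortize \<pi> f = (\<lambda>\<sigma>. enn2ereal (f \<sigma>) - ereal (\<pi> \<sigma>))"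

lemma ereal_minus_add_cancel [simp]: "a - ereal r + ereal r = a"
  by (cases a) auto

lemma ereal_minus_real_le_iff [simp]: "a - ereal r \<le> b - ereal r \<longleftrightarrow> a \<le> b"
  by (cases a; cases b) auto

lemma e2ennreal_amortize [simp]: "e2ennreal (amortize \<pi> f \<sigma> + ereal (\<pi> \<sigma>)) = f \<sigma>"
  by (simp add: amortize_def)

lemma amortize_le_iff: "amortize \<pi> f \<le> amortize \<pi> f' \<longleftrightarrow> f \<le> f'"
  unfolding amortize_def le_fun_def by (simp add: less_eq_ennreal.rep_eq)

lemma amortize_mono: "f \<le> f' \<Longrightarrow> amortize \<pi> f \<le> amortize \<pi> f'"
  by (simp add: amortize_le_iff)

lemma amortize_lower_bound: "- ereal (\<pi> \<sigma>) \<le> amortize \<pi> f \<sigma>"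
  unfolding amortize_def using enn2ereal_nonneg[of "f \<sigma>"] by (cases "enn2ereal (f \<sigma>)") auto

lemma amortize_surj:
  assumes "\<And>\<sigma>. - ereal (\<pi> \<sigma>) \<le> Y \<sigma>"
  shows "amortize \<pi> (\<lambda>\<sigma>. e2ennreal (Y \<sigma> + ereal (\<pi> \<sigma>))) = Y"
proof
  fix \<sigma>
  have "0 \<le> Y \<sigma> + ereal (\<pi> \<sigma>)"
    using assms[of \<sigma>] by (cases "Y \<sigma>") auto
  then show "amortize \<pi> (\<lambda>\<sigma>. e2ennreal (Y \<sigma> + ereal (\<pi> \<sigma>))) \<sigma> = Y \<sigma>"
    using assms[of \<sigma>] by (cases "Y \<sigma>") (auto simp: amortize_def enn2ereal_e2ennreal)
qed

lemma lfp_A_amortize: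
  assumes "mono G" and F: "\<And>k. F (amortize \<pi> k) = amortize \<pi> (G k)"
  shows "lfp_A \<pi> F = amortize \<pi> (lfp G)"
  unfolding lfp_A_def
proof (rule antisym)
  have "G (lfp G) = lfp G"
    using \<open>mono G\<close> by (rule lfp_fixpoint)
  then show "Inf {Y. (\<forall>\<sigma>. - ereal (\<pi> \<sigma>) \<le> Y \<sigma>) \<and> F Y \<le> Y} \<le> amortize \<pi> (lfp G)"
    using amortize_lower_bound[of \<pi>] by (intro Inf_lower) (simp add: F)
  show "amortize \<pi> (lfp G) \<le> Inf {Y. (\<forall>\<sigma>. - ereal (\<pi> \<sigma>) \<le> Y \<sigma>) \<and> F Y \<le> Y}"
  proof (rule Inf_greatest, clarify)
    fix Y assume Y: "\<forall>\<sigma>. - ereal (\<pi> \<sigma>) \<le> Y \<sigma>" "F Y \<le> Y"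
    define k where "k = (\<lambda>\<sigma>. e2ennreal (Y \<sigma> + ereal (\<pi> \<sigma>)))"
    have k: "amortize \<pi> k = Y"
      unfolding k_def using Y(1) by (intro amortize_surj) blast
    have "G k \<le> k"
      using Y(2) by (simp add: F amortize_le_iff flip: k)
    then show "amortize \<pi> (lfp G) \<le> Y"
      unfolding k[symmetric] by (intro amortize_mono lfp_lowerbound)
  qed
qed

lemma amortize_tick:
  "(\<lambda>\<sigma>. ereal (real (e (fst \<sigma>))) + amortize \<pi> f \<sigma>) = amortize \<pi> (\<lambda>\<sigma>. of_nat (e (fst \<sigma>)) + f \<sigma>)"
  by (simp add: amortize_def fun_eq_iff add_diff_eq_ereal plus_ennreal.rep_eq)

lemma ereal_convex_comb_minus:
  assumes "0 \<le> p" "p \<le> 1"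
  shows "ereal p * (enn2ereal a - ereal r) + ereal (1 - p) * (enn2ereal b - ereal r)
       = enn2ereal (ennreal p * a + ennreal (1 - p) * b) - ereal r"
proof (cases a rule: ennreal_cases; cases b rule: ennreal_cases)
  fix x y assume "a = ennreal x" "0 \<le> x" "b = ennreal y" "0 \<le> y"
  then show ?thesis
    using assms by (simp flip: ennreal_mult ennreal_plus) (simp add: algebra_simps)
qed (use assms in \<open>cases "p = 0"; cases "p = 1"; auto simp: ennreal_top_mult ennreal_mult_top\<close>)+

lemma amortize_pchoice:
  assumes "\<And>s. 0 \<le> p s" "\<And>s. p s \<le> 1"
  shows "(\<lambda>\<sigma>. ereal (p (fst \<sigma>)) * amortize \<pi> f \<sigma> + ereal (1 - p (fst \<sigma>)) * amortize \<pi> f' \<sigma>)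
     = amortize \<pi> (\<lambda>\<sigma>. ennreal (p (fst \<sigma>)) * f \<sigma> + ennreal (1 - p (fst \<sigma>)) * f' \<sigma>)"
  by (simp add: amortize_def fun_eq_iff ereal_convex_comb_minus assms)

lemma amortize_if:
  "amortize \<pi> (\<lambda>\<sigma>. if b (fst \<sigma>) then f \<sigma> else f' \<sigma>)
     = (\<lambda>\<sigma>. if b (fst \<sigma>) then amortize \<pi> f \<sigma> else amortize \<pi> f' \<sigma>)"
  by (simp add: amortize_def fun_eq_iff)

lemma aert_amortize: "wf_prog C \<Longrightarrow> aert \<pi> C (amortize \<pi> f) = amortize \<pi> (ert C f)"
proof (induction C arbitrary: f)
  case (Tick e)
  show ?case
    by (simp add: amortize_tick sepsum_tm)
next
  case (PChoice C1 p C2)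
  then show ?case
    by (simp add: amortize_pchoice)
next
  case (If b C1 C2)
  then have "aert \<pi> C1 (amortize \<pi> f) = amortize \<pi> (ert C1 f)"
    and "aert \<pi> C2 (amortize \<pi> f) = amortize \<pi> (ert C2 f)"
    by simp_all
  then show ?case
    by (simp add: amortize_if fun_eq_iff)
next
  case (While b C)
  then have "\<And>k. aert \<pi> C (amortize \<pi> k) = amortize \<pi> (ert C k)"
    by simp
  then show ?case
    unfolding aert.simps ert.simps
    by (intro lfp_A_amortize mono_ert_loop) (simp add: amortize_if fun_eq_iff)
qed (simp_all add: atom_aert_def amortize_def)

theorem mainTheorem5:
  fixes \<pi> :: "('v::finite) state \<Rightarrow> real" and C :: "'v prog" and f g :: "'v rt"
  assumes "\<forall>\<sigma>. 0 \<le> \<pi> \<sigma>"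
    and "wf_prog C"
    and "modv C \<inter> vars_of g = {}"
  shows "aert \<pi> C (\<lambda>\<sigma>. enn2ereal (sepsum f g \<sigma>) - ereal (\<pi> \<sigma>))
         \<le> (\<lambda>\<sigma>. enn2ereal (sepsum
                   (\<lambda>\<tau>. e2ennreal (aert \<pi> C (\<lambda>\<rho>. enn2ereal (f \<rho>) - ereal (\<pi> \<rho>)) \<tau> + ereal (\<pi> \<tau>)))
                   g \<sigma>) - ereal (\<pi> \<sigma>))"
proof -
  have "aert \<pi> C (amortize \<pi> (sepsum f g)) = amortize \<pi> (ert C (sepsum f g))"
    and "(\<lambda>\<tau>. e2ennreal (aert \<pi> C (amortize \<pi> f) \<tau> + ereal (\<pi> \<tau>))) = ert C f"
    using aert_amortize[OF assms(2)] by simp_all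
  moreover have "amortize \<pi> (ert C (sepsum f g)) \<le> amortize \<pi> (sepsum (ert C f) g)"
    using ert_frame[OF assms(2,3)] by (rule amortize_mono)
  ultimately show ?thesis
    by (simp add: amortize_def)
qed

end
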